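(* Let $G$ be a group with identity $e$, $A$ a set with at least two elements, and $\tau: A^G\to A^G$ a lazy cellular automaton with minimal neighborhood $S \subseteq G$, unique active transition $p \in A^S$ and writing symbol $a \in A \setminus \{p(e)\}$. For $b \in A$ let $S_b := \{s\in S : p(s) = b\}$. Assume at least one of the following holds: \begin{enumerate} \item $S_a = \emptyset$; \item $S_a^{-1}\subseteq S_b^{-1}S_a$ for some $b\in A\setminus\{a\}$; \item $S_a^{-1}\subseteq S_{b_1}^{-1}S_{b_2}$ for some $b_1, b_2\in A\setminus\{a\}$ with $b_1\neq b_2$. \end{enumerate} Then $\tau$ is idempotent, i.e., $\tau^2 = \tau$.
   Context: $A^G$ is the set of maps $G \to A$ with shift action $(g\cdot x)(h) := x(hg)$. A cellular automaton is a map $\tau : A^G \to A^G$ with a finite $S \subseteq G$ (a neighborhood) and $\mu : A^S \to A$ such that $\tau(x)(g) = \mu((g\cdot x)|_S)$; the minimal neighborhood is the unique neighborhood of smallest cardinality. $\tau$ is lazy with unique active transition $p \in A^S$ if there is a local defining map $\mu : A^S \to A$ with $e \in S$ such that for all $z \in A^S$: $\mu(z) = z(e)$ iff $z \neq p$; its writing symbol is $a:=\mu(p)$. For $S, K \subseteq G$, $SK := \{sk : s\in S, k \in K\}$ and $S^{-1} := \{s^{-1} : s\in S\}$. *)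

theory Defs
  imports "HOL-Library.FuncSet"
begin

text \<open>The group G is a type of class group_add (not necessarily abelian), written
additively: identity 0, product g + h, inverse - g.  Configurations are maps G => A.\<close>

definition shift :: "'g::group_add \<Rightarrow> ('g \<Rightarrow> 'a) \<Rightarrow> ('g \<Rightarrow> 'a)" where
  "shift g x = (\<lambda>h. x (h + g))"

text \<open>mu is a local defining map for tau over S (patterns in A^S are extensional
functions on S, obtained by restrict).\<close>
definition local_rule :: "(('g::group_add \<Rightarrow> 'a) \<Rightarrow> ('g \<Rightarrow> 'a)) \<Rightarrow> 'g set \<Rightarrow> (('g \<Rightarrow> 'a) \<Rightarrow> 'a) \<Rightarrow> bool" where
  "local_rule \<tau> S \<mu> \<longleftrightarrow> (\<forall>x g. \<tau> x g = \<mu> (restrict (shift g x) S))"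

definition neighborhood :: "(('g::group_add \<Rightarrow> 'a) \<Rightarrow> ('g \<Rightarrow> 'a)) \<Rightarrow> 'g set \<Rightarrow> bool" where
  "neighborhood \<tau> S \<longleftrightarrow> finite S \<and> (\<exists>\<mu>. local_rule \<tau> S \<mu>)"

definition cellular_automaton :: "(('g::group_add \<Rightarrow> 'a) \<Rightarrow> ('g \<Rightarrow> 'a)) \<Rightarrow> bool" where
  "cellular_automaton \<tau> \<longleftrightarrow> (\<exists>S. neighborhood \<tau> S)"

definition minimal_neighborhood :: "(('g::group_add \<Rightarrow> 'a) \<Rightarrow> ('g \<Rightarrow> 'a)) \<Rightarrow> 'g set \<Rightarrow> bool" where
  "minimal_neighborhood \<tau> S \<longleftrightarrow> neighborhood \<tau> S \<and> (\<forall>S'. neighborhood \<tau> S' \<longrightarrow> card S \<le> card S')"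

definition level_set :: "'g set \<Rightarrow> ('g \<Rightarrow> 'a) \<Rightarrow> 'a \<Rightarrow> 'g set" where
  "level_set S p b = {s \<in> S. p s = b}"

definition set_inv :: "'g::group_add set \<Rightarrow> 'g set" where
  "set_inv K = uminus ` K"

definition set_prod :: "'g::group_add set \<Rightarrow> 'g set \<Rightarrow> 'g set" where
  "set_prod K L = {k + l | k l. k \<in> K \<and> l \<in> L}"

end

theory Submission
  imports Defs
begin

text \<open>A lazy automaton writes \<open>a\<close> at \<open>g\<close> exactly where the pattern \<open>p\<close> occurs around \<open>g\<close>,
  so \<open>\<tau>\<close> is idempotent as soon as \<open>p\<close> never occurs in an image \<open>\<tau> x\<close>. If it occurred around \<open>g\<close>,
  then it did not occur in \<open>x\<close> around \<open>g\<close> (the cell \<open>g\<close> would carry \<open>a \<noteq> p 0\<close>), so \<open>\<tau>\<close> must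
  have rewritten some cell \<open>s + g\<close> with \<open>p s = a\<close>, i.e. \<open>p\<close> occurs in \<open>x\<close> around \<open>s + g\<close>. Each of
  the three hypotheses provides a cell \<open>t\<close> with \<open>p t \<noteq> a\<close> on which these two overlapping copies of
  \<open>p\<close> disagree, although \<open>\<tau>\<close> leaves that cell unchanged.\<close>

definition occurs_at :: "'g set \<Rightarrow> ('g \<Rightarrow> 'a) \<Rightarrow> ('g::group_add \<Rightarrow> 'a) \<Rightarrow> 'g \<Rightarrow> bool" where
  "occurs_at S p x g \<longleftrightarrow> (\<forall>s\<in>S. x (s + g) = p s)"

definition conflicting_overlaps :: "'g::group_add set \<Rightarrow> ('g \<Rightarrow> 'a) \<Rightarrow> 'a \<Rightarrow> bool" where
  "conflicting_overlaps S p a \<longleftrightarrow>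
     (\<forall>s\<in>level_set S p a. \<exists>t\<in>S. t + - s \<in> S \<and> p t \<noteq> a \<and> p (t + - s) \<noteq> p t)"

lemma restrict_shift_eq_iff_occurs_at:
  assumes "p \<in> S \<rightarrow>\<^sub>E UNIV"
  shows "restrict (shift g x) S = p \<longleftrightarrow> occurs_at S p x g"
proof
  assume "restrict (shift g x) S = p"
  then show "occurs_at S p x g"
    unfolding occurs_at_def by (metis restrict_apply shift_def)
next
  assume "occurs_at S p x g"
  then show "restrict (shift g x) S = p"
    using assms by (auto simp: occurs_at_def shift_def fun_eq_iff PiE_def extensional_def)
qed

lemma lazy_local_rule_apply:
  assumes "local_rule \<tau> S \<mu>" and "0 \<in> S" and "p \<in> S \<rightarrow>\<^sub>E UNIV"
    and lazy: "\<forall>z \<in> S \<rightarrow>\<^sub>E UNIV. (\<mu> z = z 0 \<longleftrightarrow> z \<noteq> p)"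
  shows "\<tau> x g = (if occurs_at S p x g then \<mu> p else x g)"
proof -
  define z where "z = restrict (shift g x) S"
  have "\<tau> x g = \<mu> z"
    using assms(1) by (simp add: local_rule_def z_def)
  moreover have "z \<in> S \<rightarrow>\<^sub>E UNIV" and "z 0 = x g"
    using \<open>0 \<in> S\<close> by (simp_all add: z_def shift_def)
  moreover have "z = p \<longleftrightarrow> occurs_at S p x g"
    unfolding z_def using restrict_shift_eq_iff_occurs_at[OF assms(3)] .
  ultimately show ?thesis
    using lazy by auto
qed

lemma occurs_at_translate:
  assumes "occurs_at S p x (s + g)" and "t + - s \<in> S"
  shows "x (t + g) = p (t + - s)"
proof -
  have "t + - s + (s + g) = t + g"
    by (simp add: add.assoc[symmetric])
  then show ?thesis
    using assms unfolding occurs_at_def by metis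
qed

lemma lazy_not_occurs_at_image:
  fixes \<tau> :: "('g::group_add \<Rightarrow> 'a) \<Rightarrow> ('g \<Rightarrow> 'a)"
  assumes step: "\<And>x g. \<tau> x g = (if occurs_at S p x g then a else x g)"
    and "0 \<in> S" and "a \<noteq> p 0" and conflict: "conflicting_overlaps S p a"
  shows "\<not> occurs_at S p (\<tau> x) g"
proof
  assume image: "occurs_at S p (\<tau> x) g"
  have unchanged_or_written: "x (t + g) = p t \<or> (p t = a \<and> occurs_at S p x (t + g))"
    if "t \<in> S" for t
    using image that step[of x "t + g"] unfolding occurs_at_def by (metis (full_types))
  have "\<not> occurs_at S p x g"
    using image step[of x g] \<open>0 \<in> S\<close> \<open>a \<noteq> p 0\<close> unfolding occurs_at_def by force
  then obtain s where "s \<in> S" and "x (s + g) \<noteq> p s"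
    unfolding occurs_at_def by blast
  with unchanged_or_written have "s \<in> level_set S p a" and written: "occurs_at S p x (s + g)"
    by (auto simp: level_set_def)
  with conflict obtain t where t: "t \<in> S" "t + - s \<in> S" "p t \<noteq> a" "p (t + - s) \<noteq> p t"
    unfolding conflicting_overlaps_def by blast
  have "x (t + g) = p (t + - s)"
    using occurs_at_translate[OF written t(2)] .
  moreover have "x (t + g) = p t"
    using unchanged_or_written[OF t(1)] t(3) by blast
  ultimately show False
    using t(4) by simp
qed

lemma lazy_idempotent:
  fixes \<tau> :: "('g::group_add \<Rightarrow> 'a) \<Rightarrow> ('g \<Rightarrow> 'a)"
  assumes step: "\<And>x g. \<tau> x g = (if occurs_at S p x g then a else x g)"
    and "0 \<in> S" and "a \<noteq> p 0" and "conflicting_overlaps S p a"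
  shows "\<tau> \<circ> \<tau> = \<tau>"
proof
  fix x
  show "(\<tau> \<circ> \<tau>) x = \<tau> x"
    using lazy_not_occurs_at_image[OF assms] step[of "\<tau> x"] by (simp add: fun_eq_iff)
qed

lemma conflicting_overlaps_if_level_set_empty:
  "level_set S p a = {} \<Longrightarrow> conflicting_overlaps S p a"
  by (simp add: conflicting_overlaps_def)

lemma conflicting_overlaps_if_inv_subset_prod:
  assumes sub: "set_inv (level_set S p a) \<subseteq> set_prod (set_inv (level_set S p b1)) (level_set S p b2)"
    and "b1 \<noteq> a" and "b1 \<noteq> b2"
  shows "conflicting_overlaps S p a"
  unfolding conflicting_overlaps_def
proof
  fix s
  assume "s \<in> level_set S p a"
  then have "- s \<in> set_prod (set_inv (level_set S p b1)) (level_set S p b2)"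
    using sub by (auto simp: set_inv_def)
  then obtain t u where "- s = - t + u" "t \<in> level_set S p b1" "u \<in> level_set S p b2"
    by (auto simp: set_prod_def set_inv_def)
  moreover from \<open>- s = - t + u\<close> have "t + - s = u"
    by (simp add: add.assoc[symmetric])
  ultimately show "\<exists>t\<in>S. t + - s \<in> S \<and> p t \<noteq> a \<and> p (t + - s) \<noteq> p t"
    using assms(2,3) unfolding level_set_def by (metis (mono_tags, lifting) mem_Collect_eq)
qed

theorem corollary3:
  fixes \<tau> :: "('g::group_add \<Rightarrow> 'a) \<Rightarrow> ('g \<Rightarrow> 'a)"
    and S :: "'g set" and p :: "'g \<Rightarrow> 'a" and \<mu> :: "('g \<Rightarrow> 'a) \<Rightarrow> 'a" and a :: 'a
  assumes two: "\<exists>x y :: 'a. x \<noteq> y"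
    and ca: "cellular_automaton \<tau>"
    and minS: "minimal_neighborhood \<tau> S"
    and e_in: "0 \<in> S"
    and mu: "local_rule \<tau> S \<mu>"
    and p: "p \<in> S \<rightarrow>\<^sub>E UNIV"
    and lazy: "\<forall>z \<in> S \<rightarrow>\<^sub>E UNIV. (\<mu> z = z 0 \<longleftrightarrow> z \<noteq> p)"
    and a_def: "a = \<mu> p"
    and a_ne: "a \<noteq> p 0"
    and cond: "level_set S p a = {}
      \<or> (\<exists>b. b \<noteq> a \<and> set_inv (level_set S p a) \<subseteq> set_prod (set_inv (level_set S p b)) (level_set S p a))
      \<or> (\<exists>b1 b2. b1 \<noteq> a \<and> b2 \<noteq> a \<and> b1 \<noteq> b2 \<and>
            set_inv (level_set S p a) \<subseteq> set_prod (set_inv (level_set S p b1)) (level_set S p b2))"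
  shows "\<tau> \<circ> \<tau> = \<tau>"
proof (rule lazy_idempotent[of \<tau> S p a])
  show "\<tau> x g = (if occurs_at S p x g then a else x g)" for x g
    using lazy_local_rule_apply[OF mu e_in p lazy] a_def by simp
  show "conflicting_overlaps S p a"
    using cond conflicting_overlaps_if_level_set_empty conflicting_overlaps_if_inv_subset_prod
    by metis
qed (use e_in a_ne in auto)

end
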